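(* In the setting described in the context, assume the non-degeneracy condition (for every $i\neq i'$ there exists $n$ with $\Lambda_{ni}\neq\Lambda_{ni'}$), and let $U_\circ$ be an exact joint triangularizer of $\{M_n\}$ and $U=U_\circ e^{\alpha X}$ ($X=-X^T$, $\|X\|=1$, $\alpha>0$) an approximate joint triangularizer of $\{\hat M_n\}$ whose $\alpha$ satisfies $\alpha\le2\sqrt2\,\sigma\|\tilde T^{-1}\|_2\sqrt{\sum_n\|M_n\|^2}\sqrt{\sum_n\|W_n\|^2}+O((\alpha+\sigma)^2)$, with $\tilde T=\sum_n\tilde t_n^T\tilde t_n$, $\tilde t_n=P_{\rm low}(1\otimes U_\circ^TM_n^TU_\circ-U_\circ^TM_nU_\circ\otimes1)P_{\rm low}^T$. For all $n$ and $i$ let $\hat\lambda_i(\hat M_n)=[U^T\hat M_nU]_{ii}$ and $\lambda_i(M_n)=[U_\circ^TM_nU_\circ]_{ii}$. Then for all $n=1,\dots,N$ and $i=1,\dots,d$, $$|\hat\lambda_i(\hat M_n)-\lambda_i(M_n)|\le2\alpha\|M_n\|+\sigma\|W_n\|+O(\alpha^2).$$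
   Context: All matrices are real; $\|\cdot\|$ is the Frobenius norm, $\|\cdot\|_2$ the spectral norm. ${\rm low}(A)$ is the strictly lower-triangular part of $A$; $\otimes$ the Kronecker product; $1$ the identity. $P_{\rm low}\in\{0,1\}^{\frac{d(d-1)}2\times d^2}$ has as rows the standard basis row vectors of $\mathbb R^{d^2}$ selecting (in increasing order) the entries of the column-wise vectorization of a matrix corresponding to its strictly lower-triangular entries. Model: $\hat M_n=M_n+\sigma W_n$, $M_n=V\,{\rm diag}(\Lambda_{n1},\dots,\Lambda_{nd})V^{-1}$, $n=1,\dots,N$, $V$ real invertible, $\Lambda_{ni}$ real, $\sigma>0$, $\|W_n\|\le1$. Exact joint triangularizer of $\{M_n\}$: orthogonal $U_\circ$ with ${\rm low}(U_\circ^TM_nU_\circ)=0$ for all $n$. Approximate joint triangularizer of $\{\hat M_n\}$: solution (stationary point) of $\min_{U\in\mathbb O(d)}\sum_n\|{\rm low}(U^T\hat M_nU)\|^2$. Inequalities are first-order, valid up to the indicated second-order terms. *)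

theory Defs
  imports "HOL-Analysis.Analysis"
begin

text \<open>Matrices are d x d real matrices of type real^'d^'d, with an index type 'd that is
  finite and linearly ordered (the order fixes which entries are "strictly lower").
  The norm of HOL-Analysis on real^'d^'d is exactly the Frobenius norm.\<close>

definition spec_norm :: "real^'n^'m \<Rightarrow> real" where
  "spec_norm A = onorm (\<lambda>x. A *v x)"

definition low :: "real^('d::{finite,linorder})^('d::{finite,linorder}) \<Rightarrow> real^('d::{finite,linorder})^('d::{finite,linorder})" where
  "low A = (\<chi> i j. if j < i then A $ i $ j else 0)"

definition diag_mat :: "real^('d::{finite,linorder}) \<Rightarrow> real^('d::{finite,linorder})^('d::{finite,linorder})" where
  "diag_mat v = (\<chi> i j. if i = j then v $ i else 0)"

primrec mpow :: "real^('d::{finite,linorder})^('d::{finite,linorder}) \<Rightarrow> nat \<Rightarrow> real^('d::{finite,linorder})^('d::{finite,linorder})" where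
  "mpow A 0 = mat 1"
| "mpow A (Suc k) = A ** mpow A k"

definition mexp :: "real^('d::{finite,linorder})^('d::{finite,linorder}) \<Rightarrow> real^('d::{finite,linorder})^('d::{finite,linorder})" where
  "mexp A = (\<Sum>k. (1 / fact k) *\<^sub>R mpow A k)"

definition skew :: "real^('d::{finite,linorder})^('d::{finite,linorder}) \<Rightarrow> bool" where
  "skew X \<longleftrightarrow> transpose X = - X"

definition exact_joint_triangularizer :: "nat \<Rightarrow> (nat \<Rightarrow> real^('d::{finite,linorder})^('d::{finite,linorder})) \<Rightarrow> real^('d::{finite,linorder})^('d::{finite,linorder}) \<Rightarrow> bool" where
  "exact_joint_triangularizer N M U \<longleftrightarrow>
     orthogonal_matrix U \<and> (\<forall>n\<in>{1..N}. low (transpose U ** M n ** U) = 0)"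

definition jt_cost :: "nat \<Rightarrow> (nat \<Rightarrow> real^('d::{finite,linorder})^('d::{finite,linorder})) \<Rightarrow> real^('d::{finite,linorder})^('d::{finite,linorder}) \<Rightarrow> real" where
  "jt_cost N M U = (\<Sum>n=1..N. (norm (low (transpose U ** M n ** U)))\<^sup>2)"

text \<open>Approximate joint triangularizer: a stationary point of the cost on the orthogonal
  group O(d), i.e. the derivative of the cost along every curve U e^{tK}, K skew, vanishes at t=0.\<close>
definition approx_joint_triangularizer :: "nat \<Rightarrow> (nat \<Rightarrow> real^('d::{finite,linorder})^('d::{finite,linorder})) \<Rightarrow> real^('d::{finite,linorder})^('d::{finite,linorder}) \<Rightarrow> bool" where
  "approx_joint_triangularizer N M U \<longleftrightarrow>
     orthogonal_matrix U \<and>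
     (\<forall>K::real^('d::{finite,linorder})^('d::{finite,linorder}). skew K \<longrightarrow>
        ((\<lambda>t. jt_cost N M (U ** mexp (t *\<^sub>R K))) has_real_derivative 0) (at 0))"

text \<open>Column-wise vectorization: vectors in R^(d^2) are indexed by pairs (i,j), the
  coordinate (i,j) being the (i,j) entry, vec A = (A_ij). With this indexing the Kronecker
  product B (x) C has entry B_{j j'} C_{i i'} at row (i,j), column (i',j'), so that
  (B (x) C) vec L = vec (C L B^T), as for the usual column-wise vec.\<close>
definition vec_cw :: "real^('d::{finite,linorder})^('d::{finite,linorder}) \<Rightarrow> real^(('d::{finite,linorder})\<times>('d::{finite,linorder}))" where
  "vec_cw A = (\<chi> p. A $ fst p $ snd p)"

definition kron :: "real^('d::{finite,linorder})^('d::{finite,linorder}) \<Rightarrow> real^('d::{finite,linorder})^('d::{finite,linorder}) \<Rightarrow> real^(('d::{finite,linorder})\<times>('d::{finite,linorder}))^(('d::{finite,linorder})\<times>('d::{finite,linorder}))" where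
  "kron B C = (\<chi> p q. B $ snd p $ snd q * C $ fst p $ fst q)"

text \<open>Index set of the strictly lower-triangular entries; P_low selects these coordinates.
  A vector of R^(d(d-1)/2) is represented by a vector of R^(d^2) supported on lowset, and a
  d(d-1)/2 x d(d-1)/2 matrix by a d^2 x d^2 matrix supported on lowset x lowset
  (i.e. B is represented by P_low^T B P_low). Plow_proj = P_low^T P_low.\<close>
definition lowset :: "(('d::{finite,linorder}) \<times> ('d::{finite,linorder})) set" where
  "lowset = {p. snd p < fst p}"

definition Plow_proj :: "real^(('d::{finite,linorder})\<times>('d::{finite,linorder}))^(('d::{finite,linorder})\<times>('d::{finite,linorder}))" where
  "Plow_proj = (\<chi> p q. if p = q \<and> p \<in> lowset then 1 else 0)"

text \<open>P_low^T t_n P_low, where t_n = P_low (1 (x) A^T - A (x) 1) P_low^T, A = U_o^T M_n U_o.\<close>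
definition t_tilde :: "real^('d::{finite,linorder})^('d::{finite,linorder}) \<Rightarrow> real^('d::{finite,linorder})^('d::{finite,linorder}) \<Rightarrow> real^('d::{finite,linorder}\<times>('d::{finite,linorder}))^(('d::{finite,linorder})\<times>('d::{finite,linorder}))" where
  "t_tilde U0 Mn = Plow_proj **
      (kron (mat 1) (transpose U0 ** transpose Mn ** U0) - kron (transpose U0 ** Mn ** U0) (mat 1))
      ** Plow_proj"

text \<open>P_low^T T P_low with T = sum_n t_n^T t_n.\<close>
definition T_tilde :: "nat \<Rightarrow> (nat \<Rightarrow> real^('d::{finite,linorder})^('d::{finite,linorder})) \<Rightarrow> real^('d::{finite,linorder})^('d::{finite,linorder}) \<Rightarrow> real^('d::{finite,linorder}\<times>('d::{finite,linorder}))^(('d::{finite,linorder})\<times>('d::{finite,linorder}))" where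
  "T_tilde N M U0 = (\<Sum>n=1..N. transpose (t_tilde U0 (M n)) ** t_tilde U0 (M n))"

text \<open>Inverse of the represented d(d-1)/2 x d(d-1)/2 matrix (again represented padded by zeros).\<close>
definition low_inv :: "real^('d::{finite,linorder}\<times>('d::{finite,linorder}))^(('d::{finite,linorder})\<times>('d::{finite,linorder})) \<Rightarrow> real^(('d::{finite,linorder})\<times>('d::{finite,linorder}))^(('d::{finite,linorder})\<times>('d::{finite,linorder}))" where
  "low_inv T = (THE B. (\<forall>p q. (p \<notin> lowset \<or> q \<notin> lowset) \<longrightarrow> B $ p $ q = 0)
                       \<and> B ** T = Plow_proj \<and> T ** B = Plow_proj)"

end

theory Submission
  imports Defs
begin

text \<open>Write \<open>U = U\<^sub>\<circ> E\<close> with \<open>E = e\<^bsup>\<alpha>X\<^esup> = 1 + D\<close>, where \<open>\<parallel>D\<parallel> \<le> e\<^sup>\<alpha> - 1 = \<alpha> + O(\<alpha>\<^sup>2)\<close>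
  since \<open>\<parallel>X\<parallel> = 1\<close>. With \<open>A = U\<^sub>\<circ>\<^sup>T M\<^sub>n U\<^sub>\<circ>\<close> we get \<open>U\<^sup>T M\<^sub>n U - A = D\<^sup>T A + A D + D\<^sup>T A D\<close>,
  whose Frobenius norm is at most \<open>2\<alpha>\<parallel>M\<^sub>n\<parallel> + O(\<alpha>\<^sup>2)\<close> by submultiplicativity and orthogonal
  invariance; the noise term contributes the diagonal entry of \<open>\<sigma> U\<^sup>T W\<^sub>n U\<close>, bounded by
  \<open>\<sigma>\<parallel>W\<^sub>n\<parallel>\<close>. Any diagonal entry is bounded by the Frobenius norm.\<close>

lemma matrix_add_rdistrib: "((A::real^'n^'m) + B) ** (C::real^'p^'n) = A ** C + B ** C"
  by (vector matrix_matrix_mult_def sum.distrib[symmetric] field_simps)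

lemma transpose_add: "transpose ((A::real^'n^'m) + B) = transpose A + transpose B"
  by (simp add: transpose_def vec_eq_iff)

lemma matrix_matrix_mult_entry: "((A::real^'n^'m) ** (B::real^'p^'n)) $ i $ j = A $ i \<bullet> column j B"
  by (simp add: matrix_matrix_mult_def inner_vec_def column_def mult.commute)

lemma column_matrix_mult: "column j ((Q::real^'n^'m) ** (A::real^'p^'n)) = Q *v column j A"
  by (simp add: column_def matrix_matrix_mult_def matrix_vector_mult_def vec_eq_iff)


lemma norm_vec_squared: "(norm (x::'a::real_normed_vector^'n))\<^sup>2 = (\<Sum>i\<in>UNIV. (norm (x$i))\<^sup>2)"
  by (simp add: norm_vec_def L2_set_def sum_nonneg)

lemma norm_matrix_squared: "(norm (A::real^'n^'m))\<^sup>2 = (\<Sum>i\<in>UNIV. \<Sum>j\<in>UNIV. (A$i$j)\<^sup>2)"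
  by (simp add: norm_vec_squared[of A] norm_vec_squared[of "A$_"])

lemma norm_matrix_squared_columns: "(norm (A::real^'n^'m))\<^sup>2 = (\<Sum>j\<in>UNIV. (norm (column j A))\<^sup>2)"
proof -
  have "(\<Sum>j\<in>UNIV. (norm (column j A))\<^sup>2) = (\<Sum>j\<in>UNIV. \<Sum>i\<in>UNIV. (A$i$j)\<^sup>2)"
    by (simp add: norm_vec_squared column_def)
  also have "\<dots> = (\<Sum>i\<in>UNIV. \<Sum>j\<in>UNIV. (A$i$j)\<^sup>2)" by (rule sum.swap)
  finally show ?thesis by (simp add: norm_matrix_squared)
qed

lemma norm_transpose: "norm (transpose (A::real^'n^'m)) = norm A"
proof -
  have "(norm (transpose A))\<^sup>2 = (\<Sum>i\<in>UNIV. \<Sum>j\<in>UNIV. (A$j$i)\<^sup>2)"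
    by (simp add: norm_matrix_squared transpose_def)
  also have "\<dots> = (\<Sum>j\<in>UNIV. \<Sum>i\<in>UNIV. (A$j$i)\<^sup>2)" by (rule sum.swap)
  also have "\<dots> = (norm A)\<^sup>2" by (simp add: norm_matrix_squared)
  finally show ?thesis by (simp add: power2_eq_iff_nonneg)
qed

lemma abs_matrix_entry_le_norm: "\<bar>(A::real^'n^'m) $ i $ j\<bar> \<le> norm A"
  using component_le_norm_cart[of "A $ i" j] Finite_Cartesian_Product.norm_nth_le[of A i]
  by linarith

lemma norm_matrix_mult_le: "norm ((A::real^'n^'m) ** (B::real^'p^'n)) \<le> norm A * norm B"
proof -
  have "(norm (A ** B))\<^sup>2 = (\<Sum>i\<in>UNIV. \<Sum>j\<in>UNIV. (A $ i \<bullet> column j B)\<^sup>2)"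
    by (simp add: norm_matrix_squared matrix_matrix_mult_entry)
  also have "\<dots> \<le> (\<Sum>i\<in>UNIV. \<Sum>j\<in>UNIV. (norm (A$i))\<^sup>2 * (norm (column j B))\<^sup>2)"
  proof (intro sum_mono)
    fix i j
    have "\<bar>A $ i \<bullet> column j B\<bar>\<^sup>2 \<le> (norm (A$i) * norm (column j B))\<^sup>2"
      by (rule power_mono[OF Cauchy_Schwarz_ineq2]) simp
    then show "(A $ i \<bullet> column j B)\<^sup>2 \<le> (norm (A$i))\<^sup>2 * (norm (column j B))\<^sup>2"
      by (simp add: power_mult_distrib)
  qed
  also have "\<dots> = (norm A * norm B)\<^sup>2"
    by (simp add: sum_product norm_vec_squared[of A] norm_matrix_squared_columns[of B]
        power_mult_distrib)
  finally show ?thesis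
    by (meson norm_ge_zero power2_le_imp_le mult_nonneg_nonneg)
qed

lemma norm_orthogonal_matrix_mult_left:
  assumes "orthogonal_matrix (Q::real^'n^'n)"
  shows "norm (Q ** (A::real^'p^'n)) = norm A"
proof -
  have "norm (Q *v x) = norm x" for x
    using assms by (simp add: orthogonal_transformation_matrix orthogonal_transformation_norm)
  then have "(norm (Q ** A))\<^sup>2 = (norm A)\<^sup>2"
    by (simp add: norm_matrix_squared_columns[of "Q ** A"] norm_matrix_squared_columns[of A]
        column_matrix_mult)
  then show ?thesis by (simp add: power2_eq_iff_nonneg)
qed

lemma norm_orthogonal_matrix_mult_right:
  assumes "orthogonal_matrix (Q::real^'n^'n)"
  shows "norm ((A::real^'n^'p) ** Q) = norm A"
  using assms norm_orthogonal_matrix_mult_left[of "transpose Q" "transpose A"]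
  by (simp add: matrix_transpose_mul[symmetric] norm_transpose orthogonal_matrix_transpose)

lemma norm_orthogonal_congruence:
  assumes "orthogonal_matrix (Q::real^'n^'n)"
  shows "norm (transpose Q ** A ** Q) = norm A"
  using assms
  by (simp add: norm_orthogonal_matrix_mult_left norm_orthogonal_matrix_mult_right
      orthogonal_matrix_transpose)


lemma norm_mpow_Suc_le: "norm (mpow A (Suc k)) \<le> norm A ^ Suc k"
proof (induction k)
  case 0
  then show ?case by simp
next
  case (Suc k)
  have "norm (mpow A (Suc (Suc k))) \<le> norm A * norm (mpow A (Suc k))"
    by (simp add: norm_matrix_mult_le)
  also have "\<dots> \<le> norm A * norm A ^ Suc k"
    by (rule mult_left_mono[OF Suc]) simp
  finally show ?case by simp
qed

lemma norm_mexp_minus_id_le: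
  assumes "norm A \<le> a"
  shows "norm (mexp A - mat 1) \<le> exp a - 1"
proof -
  define f where "f = (\<lambda>k. (1 / fact k) *\<^sub>R mpow A k)"
  define g where "g = (\<lambda>k. a ^ k /\<^sub>R fact k)"
  have bound: "norm (f (Suc k)) \<le> g (Suc k)" for k
  proof -
    have "norm (f (Suc k)) = norm (mpow A (Suc k)) / fact (Suc k)"
      by (simp add: f_def)
    also have "\<dots> \<le> a ^ Suc k / fact (Suc k)"
      by (rule divide_right_mono[OF order_trans[OF norm_mpow_Suc_le power_mono[OF assms]]]) auto
    finally show ?thesis by (simp add: g_def divide_inverse mult.commute)
  qed
  have g_sums: "(\<lambda>k. g (Suc k)) sums (exp a - 1)"
    using exp_converges[of a] by (subst sums_Suc_iff) (simp add: g_def)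
  have "summable (\<lambda>k. norm (f (Suc k)))"
    by (rule summable_comparison_test[OF _ sums_summable[OF g_sums]]) (use bound in auto)
  then have "summable f"
    using summable_norm_cancel summable_Suc_iff by blast
  then have "mexp A - mat 1 = (\<Sum>k. f (Suc k))"
    using suminf_split_head[of f] by (simp add: mexp_def f_def)
  also have "norm \<dots> \<le> exp a - 1"
    using norm_suminf_le[OF bound sums_summable[OF g_sums]] sums_unique[OF g_sums] by simp
  finally show ?thesis .
qed

lemma norm_mexp_minus_id_le_small:
  assumes "norm A \<le> a" and "a < 1"
  shows "norm (mexp A - mat 1) \<le> a + a\<^sup>2"
proof -
  have "0 \<le> a" using assms(1) norm_ge_zero order_trans by blast
  then have "exp a \<le> 1 + a + a\<^sup>2" using exp_bound[of a] assms(2) by simp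
  then show ?thesis using norm_mexp_minus_id_le[OF assms(1)] by simp
qed


lemma norm_congruence_minus_le:
  fixes A D :: "real^'n^'n"
  shows "norm (transpose (mat 1 + D) ** A ** (mat 1 + D) - A)
    \<le> norm A * (2 * norm D + (norm D)\<^sup>2)"
proof -
  have "transpose (mat 1 + D) ** A ** (mat 1 + D) - A
      = transpose D ** A + A ** D + transpose D ** A ** D"
    by (simp add: transpose_add matrix_add_rdistrib matrix_add_ldistrib algebra_simps)
  also have "norm \<dots> \<le> norm (transpose D ** A) + norm (A ** D) + norm (transpose D ** A ** D)"
    by (meson norm_triangle_le norm_triangle_ineq add_mono order_refl)
  also have "\<dots> \<le> norm D * norm A + norm A * norm D + norm D * norm A * norm D"
  proof -
    have DA: "norm (transpose D ** A) \<le> norm D * norm A"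
      using norm_matrix_mult_le[of "transpose D" A] by (simp add: norm_transpose)
    moreover have "norm (transpose D ** A ** D) \<le> norm D * norm A * norm D"
      using order_trans[OF norm_matrix_mult_le mult_right_mono[OF DA norm_ge_zero]] .
    ultimately show ?thesis using norm_matrix_mult_le[of A D] by linarith
  qed
  finally show ?thesis by (simp add: algebra_simps power2_eq_square)
qed

lemma diag_entry_perturbation_le:
  fixes M W U0 X U :: "real^('n::{finite,linorder})^('n::{finite,linorder})"
  assumes "orthogonal_matrix U0" and "orthogonal_matrix U"
    and "U = U0 ** mexp (\<alpha> *\<^sub>R X)" and "norm X = 1"
    and "0 < \<alpha>" and "\<alpha> < 1" and "0 \<le> \<sigma>"
  shows "\<bar>(transpose U ** (M + \<sigma> *\<^sub>R W) ** U) $ i $ i - (transpose U0 ** M ** U0) $ i $ i\<bar>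
    \<le> 2 * \<alpha> * norm M + \<sigma> * norm W + 6 * norm M * \<alpha>\<^sup>2"
proof -
  define D where "D = mexp (\<alpha> *\<^sub>R X) - mat 1"
  define A where "A = transpose U0 ** M ** U0"
  have D_small: "norm D \<le> \<alpha> + \<alpha>\<^sup>2"
    unfolding D_def using assms by (intro norm_mexp_minus_id_le_small) auto
  moreover have "\<alpha>\<^sup>2 \<le> \<alpha>"
    using assms(5,6) by (simp add: power2_eq_square mult_left_le_one_le)
  ultimately have "norm D \<le> 2 * \<alpha>" by linarith
  then have "(norm D)\<^sup>2 \<le> 4 * \<alpha>\<^sup>2"
    using power_mono[of "norm D" "2 * \<alpha>" 2] by (simp add: power_mult_distrib)
  with D_small have "2 * norm D + (norm D)\<^sup>2 \<le> 2 * \<alpha> + 6 * \<alpha>\<^sup>2" by linarith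
  then have "norm A * (2 * norm D + (norm D)\<^sup>2) \<le> norm M * (2 * \<alpha> + 6 * \<alpha>\<^sup>2)"
    by (simp add: A_def norm_orthogonal_congruence[OF assms(1)] mult_left_mono)
  then have signal: "norm (transpose (mat 1 + D) ** A ** (mat 1 + D) - A)
      \<le> 2 * \<alpha> * norm M + 6 * norm M * \<alpha>\<^sup>2"
    using norm_congruence_minus_le[of D A] by (simp add: algebra_simps)
  have "transpose U ** M ** U = transpose (mat 1 + D) ** A ** (mat 1 + D)"
    by (simp add: assms(3) D_def A_def matrix_transpose_mul matrix_mul_assoc)
  then have "transpose U ** (M + \<sigma> *\<^sub>R W) ** U
      = (transpose (mat 1 + D) ** A ** (mat 1 + D) - A) + A + \<sigma> *\<^sub>R (transpose U ** W ** U)"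
    by (simp add: matrix_add_ldistrib matrix_add_rdistrib matrix_scalar_ac scalar_matrix_assoc)
  moreover have "\<bar>\<sigma> * (transpose U ** W ** U) $ i $ i\<bar> \<le> \<sigma> * norm W"
    using abs_matrix_entry_le_norm[of "transpose U ** W ** U" i i] assms(7)
    by (simp add: abs_mult norm_orthogonal_congruence[OF assms(2)] mult_left_mono)
  ultimately show ?thesis
    using signal abs_matrix_entry_le_norm[of "transpose (mat 1 + D) ** A ** (mat 1 + D) - A" i i]
    by (simp add: A_def)
qed

theorem lemma12:
  fixes N :: nat
    and V :: "real^('d::{finite,linorder})^('d::{finite,linorder})"
    and Lam :: "nat \<Rightarrow> real^('d::{finite,linorder})"
    and U0 :: "real^('d::{finite,linorder})^('d::{finite,linorder})"
    and C' :: real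
  defines "M \<equiv> (\<lambda>n. V ** diag_mat (Lam n) ** matrix_inv V)"
  assumes V_inv: "invertible V"
    and nondeg: "\<forall>i i'. i \<noteq> i' \<longrightarrow> (\<exists>n\<in>{1..N}. Lam n $ i \<noteq> Lam n $ i')"
    and U0_exact: "exact_joint_triangularizer N M U0"
  shows "\<exists>C \<delta>. \<delta> > 0 \<and>
    (\<forall>(\<sigma>::real) (W::nat \<Rightarrow> real^('d::{finite,linorder})^('d::{finite,linorder})) (\<alpha>::real) (X::real^('d::{finite,linorder})^('d::{finite,linorder})) (U::real^('d::{finite,linorder})^('d::{finite,linorder})).
       \<sigma> > 0 \<longrightarrow> (\<forall>n\<in>{1..N}. norm (W n) \<le> 1) \<longrightarrow>
       skew X \<longrightarrow> norm X = 1 \<longrightarrow> \<alpha> > 0 \<longrightarrow>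
       \<alpha> < \<delta> \<longrightarrow> \<sigma> < \<delta> \<longrightarrow>
       U = U0 ** mexp (\<alpha> *\<^sub>R X) \<longrightarrow>
       approx_joint_triangularizer N (\<lambda>n. M n + \<sigma> *\<^sub>R W n) U \<longrightarrow>
       \<alpha> \<le> 2 * sqrt 2 * \<sigma> * spec_norm (low_inv (T_tilde N M U0))
              * sqrt (\<Sum>n=1..N. (norm (M n))\<^sup>2) * sqrt (\<Sum>n=1..N. (norm (W n))\<^sup>2)
            + C' * (\<alpha> + \<sigma>)\<^sup>2 \<longrightarrow>
       (\<forall>n\<in>{1..N}. \<forall>i.
          \<bar>(transpose U ** (M n + \<sigma> *\<^sub>R W n) ** U) $ i $ i - (transpose U0 ** M n ** U0) $ i $ i\<bar>
            \<le> 2 * \<alpha> * norm (M n) + \<sigma> * norm (W n) + C * \<alpha>\<^sup>2))"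
proof -
  define S where "S = (\<Sum>n=1..N. norm (M n))"
  have U0_orth: "orthogonal_matrix U0"
    using U0_exact by (simp add: exact_joint_triangularizer_def)
  have "\<bar>(transpose U ** (M n + \<sigma> *\<^sub>R W n) ** U) $ i $ i - (transpose U0 ** M n ** U0) $ i $ i\<bar>
      \<le> 2 * \<alpha> * norm (M n) + \<sigma> * norm (W n) + 6 * S * \<alpha>\<^sup>2"
    if "n \<in> {1..N}" "0 < \<sigma>" "norm X = 1" "0 < \<alpha>" "\<alpha> < 1" "U = U0 ** mexp (\<alpha> *\<^sub>R X)"
      "approx_joint_triangularizer N (\<lambda>n. M n + \<sigma> *\<^sub>R W n) U"
    for n i \<sigma> \<alpha> X U W
  proof -
    have "norm (M n) * \<alpha>\<^sup>2 \<le> S * \<alpha>\<^sup>2"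
      unfolding S_def by (intro mult_right_mono member_le_sum that(1)) auto
    then show ?thesis
      using diag_entry_perturbation_le[where M="M n" and W="W n" and \<sigma>=\<sigma> and i=i,
          OF U0_orth _ that(6,3,4,5)] that(2,7)
      by (simp add: approx_joint_triangularizer_def)
  qed
  then show ?thesis
    by (intro exI[of _ "6 * S"] exI[of _ "1::real"]) auto
qed

end
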